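(* Let $R$ be a commutative ring with unit and let $S\subset\mathbb{N}$ be $R$-admissible. Then for each $m,n\in S$ with $m\mid n$ the homomorphism $\rho^R_{\langle n\rangle,\langle m\rangle}\colon R[q]^{\langle n\rangle}\to R[q]^{\langle m\rangle}$ is injective. Hence, regarding each $R[q]^{\langle n\rangle}$ ($n\in S$) as an $R$-subalgebra of $R[q]^{\langle1\rangle}=R[[q-1]]$ via these maps, $R[q]^S$ is identified with the intersection $\bigcap_{n\in S}R[q]^{\langle n\rangle}$. In particular, if $m,n\in\mathbb{N}$ and $m\mid n$, then $\rho^{\mathbb{Z}}_{\langle n\rangle,\langle m\rangle}\colon\mathbb{Z}[q]^{\langle n\rangle}\to\mathbb{Z}[q]^{\langle m\rangle}$ is injective, and $\mathbb{Z}[q]^{\mathbb{N}}=\bigcap_{n\in\mathbb{N}}\mathbb{Z}[q]^{\langle n\rangle}$ inside $\mathbb{Z}[[q-1]]$.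
   Context: $q$ is an indeterminate, $\Phi_n(q)$ the $n$th cyclotomic polynomial. For $S\subset\mathbb{N}$, $\Phi_S^*$ is the multiplicative subset of $\mathbb{Z}[q]$ generated by $\{\Phi_k(q):k\in S\}$, directed by divisibility, and $R[q]^S=\varprojlim_{f\in\Phi_S^*}R[q]/(f)$; for $S'\subset S$, $\rho^R_{S,S'}$ is induced by the identity of $R[q]$. For $n\in\mathbb{N}$, $\langle n\rangle=\{k\in\mathbb{N}:k\mid n\}$, so $R[q]^{\langle n\rangle}=\varprojlim_j R[q]/(q^n-1)^j$. $R$ is $p$-adically separated if $\bigcap_j p^jR=(0)$. For $k,k'\in\mathbb{N}$, $k\Leftrightarrow_R k'$ means $k=k'$, or $k/k'$ is an integer power (positive or negative exponent) of a prime $p$ with $R$ $p$-adically separated, or $R=\{0\}$. A subset $S\subset\mathbb{N}$ is $R$-admissible if it is nonempty, any two of its elements are joined by a finite chain in $S$ with consecutive elements related by $\Leftrightarrow_R$, $S$ is directed under divisibility, and $n\in S$ implies $\langle n\rangle\subset S$. *)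

theory Defs
  imports "HOL-Computational_Algebra.Computational_Algebra" "HOL-Library.Multiset"
begin

text \<open>Cyclotomic polynomials over the integers, defined by the recursion
  q^n - 1 = product of cyclo d over the divisors d of n (for n \<ge> 1).
  The value at 0 is irrelevant (index set is the positive integers).\<close>
function cyclo :: "nat \<Rightarrow> int poly" where
  "cyclo n = (if n = 0 then 1 else
     (monom 1 n - 1) div (\<Prod>d\<in>{d. d dvd n \<and> d < n}. cyclo d))"
  by pat_completeness auto
termination
  by (relation "measure id") auto

definition ofip :: "int poly \<Rightarrow> 'a::comm_ring_1 poly" where
  "ofip f = map_poly of_int f"

definition Phi_star :: "nat set \<Rightarrow> int poly set" where
  "Phi_star S = {prod_mset (image_mset cyclo M) | M. set_mset M \<subseteq> S}"

text \<open>Elements of R[q]^S = lim_{f \<in> \<Phi>_S^*} R[q]/(f) are represented by compatible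
  families of representatives x f \<in> R[q] (f \<in> \<Phi>_S^*), the index set being directed
  by divisibility in Z[q].\<close>
definition lim_elem :: "nat set \<Rightarrow> (int poly \<Rightarrow> 'a::comm_ring_1 poly) \<Rightarrow> bool" where
  "lim_elem S x \<longleftrightarrow> (\<forall>f\<in>Phi_star S. \<forall>g\<in>Phi_star S. f dvd g \<longrightarrow> ofip f dvd (x g - x f))"

text \<open>Equality of two families as elements of R[q]^S.  Since the maps \<rho>_{S,S'} are induced
  by the identity of R[q], \<rho>_{S,S'}(x) = \<rho>_{S,S'}(y) in R[q]^{S'} iff lim_eq S' x y.\<close>
definition lim_eq :: "nat set \<Rightarrow> (int poly \<Rightarrow> 'a::comm_ring_1 poly) \<Rightarrow> (int poly \<Rightarrow> 'a poly) \<Rightarrow> bool" where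
  "lim_eq S x y \<longleftrightarrow> (\<forall>f\<in>Phi_star S. ofip f dvd (x f - y f))"

definition divs :: "nat \<Rightarrow> nat set" where
  "divs n = {k. 0 < k \<and> k dvd n}"

definition padic_separated :: "nat \<Rightarrow> 'a::comm_ring_1 itself \<Rightarrow> bool" where
  "padic_separated p _ \<longleftrightarrow> (\<forall>x::'a. (\<forall>j. (of_nat p :: 'a) ^ j dvd x) \<longrightarrow> x = 0)"

definition rel_R :: "'a::comm_ring_1 itself \<Rightarrow> nat \<Rightarrow> nat \<Rightarrow> bool" where
  "rel_R R k k' \<longleftrightarrow> k = k' \<or>
     (\<exists>p i. prime p \<and> padic_separated p R \<and> (k = k' * p ^ i \<or> k' = k * p ^ i)) \<or>
     (UNIV :: 'a set) = {0}"

definition admissible :: "'a::comm_ring_1 itself \<Rightarrow> nat set \<Rightarrow> bool" where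
  "admissible R S \<longleftrightarrow> S \<noteq> {} \<and> S \<subseteq> {k. 0 < k} \<and>
     (\<forall>a\<in>S. \<forall>b\<in>S. (\<lambda>x y. x \<in> S \<and> y \<in> S \<and> rel_R R x y)\<^sup>*\<^sup>* a b) \<and>
     (\<forall>a\<in>S. \<forall>b\<in>S. \<exists>c\<in>S. a dvd c \<and> b dvd c) \<and>
     (\<forall>n\<in>S. divs n \<subseteq> S)"

end

(*
  Injectivity of R[q]^<n> -> R[q]^<1> is proved one prime factor of n at a time.  For a prime
  p that is p-adically separated in R and n = m p, Frobenius gives (q^m - 1)^p = q^(mp) - 1
  modulo p, so high powers of q^m - 1 lie in the ideal generated by a power of q^(mp) - 1 and
  an arbitrary power of p.  An element of R[q]^<mp> vanishing in R[q]^<m> is then divisible by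
  every power of the monic polynomial q^(mp) - 1 modulo every power of p, hence by
  separatedness it vanishes.  In an admissible set S separatedness propagates along the chains
  from 1, so it holds for every prime dividing an element of S; as S is directed, R[q]^S is
  glued from the R[q]^<n>, n in S.  Over Z every prime is separated.

  Cofinality of the powers of q^n - 1 in Phi*_<n> rests on q^n - 1 being the product of the
  cyclo d, d | n, which follows from the recursive definition because q^n - 1 is separable
  over Z, making the cyclo d for distinct d coprime.
*)
theory Submission
  imports Defs
begin

declare cyclo.simps [simp del]

section \<open>Polynomials \<open>q^n - 1\<close>\<close>

lemma ofip_1 [simp]: "ofip 1 = 1"
  by (simp add: ofip_def)

lemma coeff_ofip [simp]: "coeff (ofip p) n = of_int (coeff p n)"
  by (simp add: ofip_def coeff_map_poly)

lemma ofip_diff [simp]: "ofip (p - q) = ofip p - ofip q"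
  by (rule poly_eqI) simp

lemma ofip_mult [simp]: "ofip (p * q) = ofip p * ofip q"
  by (rule poly_eqI) (simp add: coeff_mult)

lemma ofip_power [simp]: "ofip (p ^ n) = ofip p ^ n"
  by (induction n) simp_all

lemma ofip_monom [simp]: "ofip (monom c n) = monom (of_int c) n"
  by (simp add: ofip_def map_poly_monom)

lemma ofip_dvd: "p dvd q \<Longrightarrow> ofip p dvd ofip q"
  by (metis dvd_def ofip_mult)

lemma lead_coeff_ofip:
  assumes "lead_coeff p = 1"
  shows "lead_coeff (ofip p :: 'a::comm_ring_1 poly) = 1"
proof (cases "(1::'a) = 0")
  case True
  then show ?thesis by (metis (full_types) mult.right_neutral mult_zero_right)
next
  case False
  have "coeff (ofip p :: 'a poly) (degree p) = 1"
    using assms by simp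
  then have "degree (ofip p :: 'a poly) = degree p"
    using False by (metis antisym map_poly_degree_leq le_degree ofip_def)
  then show ?thesis
    using assms by simp
qed

lemma lead_coeff_monom_minus_1:
  assumes "0 < n"
  shows "lead_coeff (monom 1 n - 1 :: 'a::comm_ring_1 poly) = 1"
proof (cases "(1::'a) = 0")
  case True
  then show ?thesis by (metis (full_types) mult.right_neutral mult_zero_right)
next
  case False
  have "coeff (monom 1 n - 1 :: 'a poly) n = 1"
    using assms by simp
  moreover have "degree (monom 1 n - 1 :: 'a poly) \<le> n"
    by (rule order.trans[OF degree_diff_le]) (auto simp: degree_monom_le)
  ultimately have "degree (monom 1 n - 1 :: 'a poly) = n"
    using False by (metis antisym le_degree)
  then show ?thesis
    using assms by simp
qed

lemma monom_minus_1_dvd_mult: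
  "(monom 1 a - 1 :: 'a::comm_ring_1 poly) dvd monom 1 (a * k) - 1"
  using power_diff_1_eq[of "monom 1 a :: 'a poly" k] by (simp add: monom_power)

lemma common_divisor_dvd_monom_minus_1_gcd:
  fixes h :: "'a::comm_ring_1 poly"
  assumes "h dvd monom 1 a - 1" "h dvd monom 1 b - 1" "a \<noteq> 0"
  shows "h dvd monom 1 (gcd a b) - 1"
proof -
  obtain x y where xy: "a * x = b * y + gcd a b"
    using bezout_nat[OF assms(3)] by blast
  have "monom 1 (gcd a b) - 1 =
      (monom 1 (a * x) - 1) - monom 1 (gcd a b) * (monom 1 (b * y) - (1::'a poly))"
    by (simp add: xy algebra_simps mult_monom)
  moreover have "h dvd monom 1 (a * x) - 1" "h dvd monom 1 (b * y) - 1"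
    using assms monom_minus_1_dvd_mult dvd_trans by blast+
  ultimately show ?thesis
    by (metis dvd_diff dvd_mult)
qed

text \<open>A repeated factor \<open>h\<close> of \<open>q^N - 1\<close> also divides the derivative \<open>N q^(N-1)\<close>, hence
  the constant \<open>q N q^(N-1) - N (q^N - 1) = N\<close>; so \<open>h\<close> is a constant dividing the leading
  coefficient of \<open>q^N - 1\<close>.\<close>
lemma square_dvd_monom_minus_1_imp_unit:
  fixes h :: "'a::{idom_divide,ring_char_0} poly"
  assumes "h * h dvd monom 1 N - 1" "0 < N"
  shows "is_unit h"
proof -
  obtain w where w: "monom 1 N - 1 = h * h * w"
    using assms(1) by blast
  have "monom (of_nat N) (N - 1) = pderiv (h * h * w)"
    by (simp flip: w add: pderiv_monom pderiv_diff)
  also have "\<dots> = h * (pderiv (h * w) + w * pderiv h)"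
    by (simp add: pderiv_mult algebra_simps)
  finally have "h dvd monom (of_nat N) (N - 1)"
    by simp
  moreover have h_dvd: "h dvd monom 1 N - 1"
    using assms(1) dvd_mult_left by blast
  ultimately have "h dvd monom 1 1 * monom (of_nat N) (N - 1) - smult (of_nat N) (monom 1 N - 1)"
    by (simp add: dvd_smult)
  also have "monom 1 1 * monom (of_nat N) (N - 1) - smult (of_nat N) (monom 1 N - 1) =
      [:of_nat N :: 'a:]"
    using assms(2) by (simp add: mult_monom smult_monom smult_diff_right monom_0)
  finally have "h dvd [:of_nat N:]" .
  then have "degree h = 0"
    using assms(2) dvd_imp_degree_le[of h "[:of_nat N:]"] by fastforce
  then obtain c where c: "h = [:c:]"
    by (metis degree_0_id)
  have "c dvd coeff (monom 1 N - 1 :: 'a poly) N"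
    using h_dvd const_poly_dvd_iff unfolding c by blast
  then show ?thesis
    using assms(2) by (simp add: c is_unit_const_poly_iff)
qed

lemma prod_dvd_if_pairwise_coprime:
  fixes f :: "'b \<Rightarrow> 'a::semiring_gcd"
  assumes "finite A"
    and "\<And>a b. a \<in> A \<Longrightarrow> b \<in> A \<Longrightarrow> a \<noteq> b \<Longrightarrow> coprime (f a) (f b)"
    and "\<And>a. a \<in> A \<Longrightarrow> f a dvd c"
  shows "prod f A dvd c"
  using assms
proof (induction A rule: finite_induct)
  case empty
  then show ?case by simp
next
  case (insert a A)
  have "coprime (f a) (prod f A)"
    by (rule prod_coprime_right) (use insert in auto)
  then show ?case
    using insert by (simp add: divides_mult)
qed

section \<open>Cyclotomic polynomials\<close>

lemma finite_divs: "0 < n \<Longrightarrow> finite (divs n)"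
  unfolding divs_def by (rule finite_subset[of _ "{..n}"]) (auto dest: dvd_imp_le)

lemma one_mem_divs: "0 < n \<Longrightarrow> 1 \<in> divs n"
  unfolding divs_def by auto

lemma divs_subset: "0 < n \<Longrightarrow> m dvd n \<Longrightarrow> divs m \<subseteq> divs n"
  unfolding divs_def by (auto intro: dvd_trans)

lemma cyclo_dvd_prod_divs: "0 < n \<Longrightarrow> k \<in> divs n \<Longrightarrow> cyclo k dvd (\<Prod>i\<in>divs n. cyclo i)"
  by (simp add: dvd_prodI finite_divs)

lemma prod_divs_remove: "0 < n \<Longrightarrow> (\<Prod>i\<in>divs n. cyclo i) = cyclo n * (\<Prod>i\<in>divs n - {n}. cyclo i)"
  by (simp add: finite_divs prod.remove divs_def)

text \<open>A common factor of \<open>cyclo a\<close> and \<open>cyclo b\<close> divides \<open>q^g - 1\<close> for \<open>g = gcd a b\<close>,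
  a proper divisor of \<open>b\<close>, and therefore occurs twice in \<open>q^b - 1\<close>.\<close>
lemma common_factor_cyclo_is_unit:
  assumes prod_eq: "\<And>k. 0 < k \<Longrightarrow> k \<le> max a b \<Longrightarrow> (\<Prod>i\<in>divs k. cyclo i) = monom 1 k - 1"
    and "0 < a" "0 < b" "\<not> b dvd a" "h dvd cyclo a" "h dvd cyclo b"
  shows "is_unit h"
proof -
  define g where "g = gcd a b"
  have g: "0 < g" "g dvd b" "g < b"
  proof -
    show "0 < g" "g dvd b"
      using assms(2) by (simp_all add: g_def)
    moreover have "g \<noteq> b"
      using assms(4) by (metis g_def gcd_dvd1)
    ultimately show "g < b"
      using assms(3) by (simp add: dvd_imp_le le_neq_implies_less)
  qed
  have cyclo_dvd: "cyclo k dvd monom 1 k - 1" if "0 < k" "k \<le> max a b" for k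
    using that cyclo_dvd_prod_divs[of k k] prod_eq[of k] by (simp add: divs_def)
  have "h dvd monom 1 a - 1" "h dvd monom 1 b - 1"
    using dvd_trans[OF assms(5) cyclo_dvd[of a]] dvd_trans[OF assms(6) cyclo_dvd[of b]] assms(2,3)
    by simp_all
  then have "h dvd monom 1 g - 1"
    unfolding g_def using assms(2) by (intro common_divisor_dvd_monom_minus_1_gcd) auto
  also have "monom 1 g - 1 = (\<Prod>i\<in>divs g. cyclo i)"
    using g prod_eq[of g] by simp
  also have "\<dots> dvd (\<Prod>i\<in>divs b - {b}. cyclo i)"
    using g assms(3) by (intro prod_dvd_prod_subset) (auto simp: finite_divs divs_def intro: dvd_trans)
  finally have "h * h dvd cyclo b * (\<Prod>i\<in>divs b - {b}. cyclo i)"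
    using assms(6) by (simp add: mult_dvd_mono)
  also have "\<dots> = monom 1 b - 1"
    using assms(3) prod_eq[of b] by (simp add: prod_divs_remove)
  finally show ?thesis
    using assms(3) by (rule square_dvd_monom_minus_1_imp_unit)
qed

lemma coprime_cyclo:
  assumes "\<And>k. 0 < k \<Longrightarrow> k \<le> max a b \<Longrightarrow> (\<Prod>i\<in>divs k. cyclo i) = monom 1 k - 1"
    and "0 < a" "0 < b" "a \<noteq> b"
  shows "coprime (cyclo a) (cyclo b)"
proof (rule coprimeI)
  fix h assume h: "h dvd cyclo a" "h dvd cyclo b"
  have "\<not> b dvd a \<or> \<not> a dvd b"
    using assms(4) dvd_antisym by blast
  then show "is_unit h"
  proof
    assume "\<not> b dvd a"
    then show ?thesis
      using common_factor_cyclo_is_unit[of a b h] assms h by blast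
  next
    assume "\<not> a dvd b"
    then show ?thesis
      using common_factor_cyclo_is_unit[of b a h] assms h by (simp add: max.commute)
  qed
qed

lemma cyclo_eq_div: "0 < n \<Longrightarrow> cyclo n = (monom 1 n - 1) div (\<Prod>i\<in>divs n - {n}. cyclo i)"
proof -
  assume "0 < n"
  then have "{d. d dvd n \<and> d < n} = divs n - {n}"
    by (auto simp: divs_def intro: gr0I)
  with \<open>0 < n\<close> show ?thesis
    using cyclo.simps[of n] by simp
qed

lemma prod_proper_cyclo_dvd:
  assumes "0 < n"
    and prod_eq: "\<And>k. 0 < k \<Longrightarrow> k < n \<Longrightarrow> (\<Prod>i\<in>divs k. cyclo i) = monom 1 k - 1"
  shows "(\<Prod>i\<in>divs n - {n}. cyclo i) dvd monom 1 n - 1"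
proof (rule prod_dvd_if_pairwise_coprime)
  have proper: "0 < k \<and> k < n \<and> k dvd n" if "k \<in> divs n - {n}" for k
    using that assms(1) by (auto simp: divs_def dest: dvd_imp_le)
  show "finite (divs n - {n})"
    using assms(1) by (simp add: finite_divs)
  show "coprime (cyclo a) (cyclo b)" if ab: "a \<in> divs n - {n}" "b \<in> divs n - {n}" "a \<noteq> b" for a b
  proof (rule coprime_cyclo)
    show "(\<Prod>i\<in>divs k. cyclo i) = monom 1 k - 1" if "0 < k" "k \<le> max a b" for k
    proof -
      have "k < n"
        using proper[OF ab(1)] proper[OF ab(2)] that(2) by linarith
      with that(1) show ?thesis
        by (rule prod_eq)
    qed
  qed (use proper ab in auto)
  show "cyclo k dvd monom 1 n - 1" if k: "k \<in> divs n - {n}" for k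
  proof -
    obtain j where "n = k * j"
      using proper[OF k] by blast
    then have "monom 1 k - 1 dvd (monom 1 n - 1 :: int poly)"
      using monom_minus_1_dvd_mult by blast
    moreover have "cyclo k dvd monom 1 k - 1"
      using proper[OF k] prod_eq[of k] cyclo_dvd_prod_divs[of k k] by (simp add: divs_def)
    ultimately show ?thesis
      by (rule dvd_trans[rotated])
  qed
qed

text \<open>Monicity is carried through the induction because it makes the division in the
  definition of \<open>cyclo\<close> exact.\<close>
lemma cyclo_prod_and_monic_step:
  assumes "0 < n"
    and IH: "\<And>k. 0 < k \<Longrightarrow> k < n \<Longrightarrow>
      (\<Prod>i\<in>divs k. cyclo i) = monom 1 k - 1 \<and> lead_coeff (cyclo k) = 1"
  shows "(\<Prod>i\<in>divs n. cyclo i) = monom 1 n - 1 \<and> lead_coeff (cyclo n) = 1"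
proof -
  define P where "P = (\<Prod>i\<in>divs n - {n}. cyclo i)"
  have "P dvd monom 1 n - 1"
    unfolding P_def using assms(1) IH by (intro prod_proper_cyclo_dvd) simp_all
  then have cyclo_P: "cyclo n * P = monom 1 n - 1"
    using cyclo_eq_div[OF assms(1)] unfolding P_def by (metis dvd_div_mult_self)
  have "0 < k \<and> k < n" if "k \<in> divs n - {n}" for k
    using that assms(1) by (auto simp: divs_def dest: dvd_imp_le)
  then have "lead_coeff P = 1"
    unfolding P_def lead_coeff_prod using IH by simp
  then have "lead_coeff (cyclo n) = 1"
    using cyclo_P lead_coeff_monom_minus_1[OF assms(1), where 'a=int]
    by (metis lead_coeff_mult mult.right_neutral)
  then show ?thesis
    using assms(1) cyclo_P by (simp add: prod_divs_remove P_def)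
qed

lemma prod_cyclo_divs:
  assumes "0 < n"
  shows "(\<Prod>k\<in>divs n. cyclo k) = monom 1 n - 1"
proof -
  have "(\<Prod>k\<in>divs n. cyclo k) = monom 1 n - 1 \<and> lead_coeff (cyclo n) = 1"
    using assms by (induction n rule: less_induct) (rule cyclo_prod_and_monic_step; blast)
  then show ?thesis ..
qed

section \<open>Compatible families\<close>

lemma Phi_star_1: "1 \<in> Phi_star S"
  unfolding Phi_star_def by (auto intro: exI[of _ "{#}"])

lemma Phi_star_mult: "f \<in> Phi_star S \<Longrightarrow> g \<in> Phi_star S \<Longrightarrow> f * g \<in> Phi_star S"
proof -
  assume "f \<in> Phi_star S" "g \<in> Phi_star S"
  then obtain M N where "f = prod_mset (image_mset cyclo M)" "set_mset M \<subseteq> S"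
    "g = prod_mset (image_mset cyclo N)" "set_mset N \<subseteq> S"
    unfolding Phi_star_def by blast
  then show "f * g \<in> Phi_star S"
    unfolding Phi_star_def by (intro CollectI exI[of _ "M + N"]) auto
qed

lemma Phi_star_power: "f \<in> Phi_star S \<Longrightarrow> f ^ n \<in> Phi_star S"
  by (induction n) (simp_all add: Phi_star_1 Phi_star_mult)

lemma Phi_star_mono: "S \<subseteq> T \<Longrightarrow> Phi_star S \<subseteq> Phi_star T"
  unfolding Phi_star_def by blast

lemma monom_minus_1_mem_Phi_star:
  assumes "0 < n"
  shows "monom 1 n - 1 \<in> Phi_star (divs n)"
proof -
  have "prod_mset (image_mset cyclo (mset_set (divs n))) = monom 1 n - 1"
    using assms by (simp add: prod_unfold_prod_mset[symmetric] prod_cyclo_divs)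
  moreover have "set_mset (mset_set (divs n)) = divs n"
    using assms by (simp add: finite_divs)
  ultimately show ?thesis
    unfolding Phi_star_def by (metis (mono_tags, lifting) CollectI order_refl)
qed

lemma Phi_star_divs_dvd_power:
  assumes "0 < n" "f \<in> Phi_star (divs n)"
  obtains L where "f dvd (monom 1 n - 1) ^ L"
proof -
  obtain M where f: "f = prod_mset (image_mset cyclo M)" and M: "set_mset M \<subseteq> divs n"
    using assms(2) unfolding Phi_star_def by blast
  have "prod_mset (image_mset cyclo M) dvd (monom 1 n - 1) ^ size M"
    using M
  proof (induction M)
    case (add k M)
    then have "cyclo k dvd monom 1 n - 1"
      using assms(1) cyclo_dvd_prod_divs[of n k] prod_cyclo_divs by simp
    with add show ?case
      by (simp add: mult_dvd_mono)
  qed simp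
  then show ?thesis
    using f that by blast
qed

definition lim_zero :: "nat set \<Rightarrow> (int poly \<Rightarrow> 'a::comm_ring_1 poly) \<Rightarrow> bool" where
  "lim_zero S d \<longleftrightarrow> (\<forall>f\<in>Phi_star S. ofip f dvd d f)"

lemma lim_eq_iff_lim_zero: "lim_eq S x y \<longleftrightarrow> lim_zero S (\<lambda>f. x f - y f)"
  by (simp add: lim_eq_def lim_zero_def)

lemma lim_elem_diff:
  assumes "lim_elem S x" "lim_elem S y"
  shows "lim_elem S (\<lambda>f. x f - y f)"
  unfolding lim_elem_def
proof (intro ballI impI)
  fix f g assume "f \<in> Phi_star S" "g \<in> Phi_star S" "f dvd g"
  then have "ofip f dvd (x g - x f) - (y g - y f)"
    using assms unfolding lim_elem_def by (blast intro: dvd_diff)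
  then show "ofip f dvd (x g - y g) - (x f - y f)"
    by (simp add: algebra_simps)
qed

lemma lim_eq_trans_sym:
  assumes "lim_eq S x z" "lim_eq S y z"
  shows "lim_eq S x y"
  unfolding lim_eq_def
proof
  fix f assume "f \<in> Phi_star S"
  then have "ofip f dvd (x f - z f) - (y f - z f)"
    using assms unfolding lim_eq_def by (blast intro: dvd_diff)
  then show "ofip f dvd x f - y f"
    by simp
qed

lemma lim_elem_mono: "S \<subseteq> T \<Longrightarrow> lim_elem T x \<Longrightarrow> lim_elem S x"
  unfolding lim_elem_def using Phi_star_mono by blast

lemma lim_eq_mono: "S \<subseteq> T \<Longrightarrow> lim_eq T x y \<Longrightarrow> lim_eq S x y"
  unfolding lim_eq_def using Phi_star_mono by blast

lemma lim_zero_if_cofinal: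
  assumes d: "lim_elem S d"
    and cofinal: "\<And>f. f \<in> Phi_star S \<Longrightarrow> \<exists>g\<in>Phi_star S. f dvd g \<and> ofip g dvd d g"
  shows "lim_zero S d"
  unfolding lim_zero_def
proof
  fix f assume f: "f \<in> Phi_star S"
  then obtain g where g: "g \<in> Phi_star S" "f dvd g" "ofip g dvd d g"
    using cofinal by blast
  have "ofip f dvd d g - d f"
    using d f g unfolding lim_elem_def by blast
  moreover have "ofip f dvd d g"
    using g ofip_dvd dvd_trans by blast
  ultimately have "ofip f dvd d g - (d g - d f)"
    by (blast intro: dvd_diff)
  then show "ofip f dvd d f"
    by simp
qed

lemma lim_zero_dvd_multiple:
  assumes "lim_elem S d" "lim_zero S' d" "S' \<subseteq> S"
    and "f \<in> Phi_star S'" "g \<in> Phi_star S" "f dvd g"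
  shows "ofip f dvd d g"
proof -
  have "ofip f dvd d g - d f"
    using assms Phi_star_mono unfolding lim_elem_def by blast
  moreover have "ofip f dvd d f"
    using assms(2,4) unfolding lim_zero_def by blast
  ultimately have "ofip f dvd (d g - d f) + d f"
    by (blast intro: dvd_add)
  then show ?thesis
    by simp
qed

lemma lim_zero_divs_if_powers:
  assumes "0 < n" "lim_elem (divs n) d"
    and "\<And>L. ofip ((monom 1 n - 1) ^ L) dvd d ((monom 1 n - 1) ^ L)"
  shows "lim_zero (divs n) d"
proof (rule lim_zero_if_cofinal[OF assms(2)])
  fix f assume "f \<in> Phi_star (divs n)"
  then obtain L where "f dvd (monom 1 n - 1) ^ L"
    using Phi_star_divs_dvd_power[OF assms(1)] by blast
  then show "\<exists>g\<in>Phi_star (divs n). f dvd g \<and> ofip g dvd d g"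
    using assms(1,3) by (blast intro: Phi_star_power monom_minus_1_mem_Phi_star)
qed

lemma lim_elem_divs_power_diff:
  assumes "0 < n" "lim_elem (divs n) d" "L \<le> N"
  shows "ofip ((monom 1 n - 1) ^ L) dvd d ((monom 1 n - 1) ^ N) - d ((monom 1 n - 1) ^ L)"
proof -
  have "(monom 1 n - 1) ^ L dvd (monom 1 n - 1 :: int poly) ^ N"
    using assms(3) by (rule le_imp_power_dvd)
  then show ?thesis
    using assms(2) Phi_star_power[OF monom_minus_1_mem_Phi_star[OF assms(1)]]
    unfolding lim_elem_def by blast
qed

lemma lim_zero_divs_dvd_at_power:
  assumes "0 < m" "m dvd n" "0 < n" "lim_elem (divs n) d" "lim_zero (divs m) d"
  shows "ofip ((monom 1 m - 1) ^ N) dvd d ((monom 1 n - 1) ^ N)"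
proof (rule lim_zero_dvd_multiple[OF assms(4,5)])
  show "divs m \<subseteq> divs n"
    using assms(2,3) by (rule divs_subset[rotated])
  show "(monom 1 m - 1) ^ N \<in> Phi_star (divs m)" "(monom 1 n - 1) ^ N \<in> Phi_star (divs n)"
    using assms(1,3) by (simp_all add: Phi_star_power monom_minus_1_mem_Phi_star)
  obtain k where "n = m * k"
    using assms(2) ..
  then show "(monom 1 m - 1) ^ N dvd (monom 1 n - 1 :: int poly) ^ N"
    by (simp add: dvd_power_same monom_minus_1_dvd_mult)
qed

section \<open>Divisibility by monic polynomials over separated rings\<close>

lemma monic_divmod:
  fixes a g :: "'a::comm_ring_1 poly"
  assumes "lead_coeff g = 1"
  obtains q r where "a = g * q + r" "\<forall>i\<ge>degree g. coeff r i = 0"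
proof (cases "g = 0")
  case True
  then have "(1::'a) = 0"
    using assms by simp
  then have "a = 0"
    by (metis (full_types) mult.right_neutral mult_zero_right poly_eqI coeff_0)
  then show ?thesis
    using that[of 0 0] by simp
next
  case False
  obtain q r where "pseudo_divmod a g = (q, r)"
    by fastforce
  from pseudo_divmod[OF False this] assms show ?thesis
    by (intro that[of q r]) (auto simp: coeff_eq_0)
qed

lemma monic_mult_eq_0:
  fixes g w :: "'a::comm_ring_1 poly"
  assumes "lead_coeff g = 1" "\<forall>i\<ge>degree g. coeff (g * w) i = 0"
  shows "w = 0"
proof (rule ccontr)
  assume "w \<noteq> 0"
  have "coeff (g * w) (degree g + degree w) = lead_coeff w"
    using coeff_mult_degree_sum[of g w] assms(1) by simp
  with assms(2) \<open>w \<noteq> 0\<close> show False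
    by simp
qed

text \<open>Over a \<open>c\<close>-adically separated ring, divisibility by a monic polynomial can be checked
  modulo every power of \<open>c\<close>: the remainders modulo \<open>g\<close> are unique, so the remainder of \<open>a\<close>
  has all coefficients divisible by every \<open>c\<^sup>j\<close>.\<close>
lemma monic_dvd_if_dvd_modulo_powers:
  fixes g a :: "'a::comm_ring_1 poly"
  assumes g: "lead_coeff g = 1"
    and separated: "\<And>x. (\<forall>j. c ^ j dvd x) \<Longrightarrow> x = 0"
    and decomp: "\<And>j. \<exists>u v. a = g * u + smult (c ^ j) v"
  shows "g dvd a"
proof -
  obtain q r where a: "a = g * q + r" and r: "\<forall>i\<ge>degree g. coeff r i = 0"
    using monic_divmod[OF g] .
  have "c ^ j dvd coeff r i" for i j
  proof -
    obtain u v where uv: "a = g * u + smult (c ^ j) v"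
      using decomp by blast
    obtain q' r' where v: "v = g * q' + r'" and r': "\<forall>i\<ge>degree g. coeff r' i = 0"
      using monic_divmod[OF g] .
    have "g * (q - u - smult (c ^ j) q') = smult (c ^ j) r' - r"
      using a uv v by (simp add: algebra_simps smult_add_right)
    moreover have "\<forall>i\<ge>degree g. coeff (smult (c ^ j) r' - r) i = 0"
      using r r' by simp
    ultimately have "smult (c ^ j) r' = r"
      using monic_mult_eq_0[OF g] by (metis mult_zero_right right_minus_eq)
    then show ?thesis
      by (metis coeff_smult dvd_triv_left)
  qed
  then have "r = 0"
    using separated by (simp add: poly_eq_iff)
  then show ?thesis
    using a by simp
qed

section \<open>Injectivity of the restriction maps\<close>

lemma prime_dvd_power_add_diff:
  fixes a b :: "'a::comm_ring_1"
  assumes "prime p"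
  shows "of_nat p dvd (a + b) ^ p - a ^ p - b ^ p"
proof -
  define t where "t k = of_nat (p choose k) * a ^ k * b ^ (p - k)" for k
  have p: "0 < p"
    using assms prime_gt_0_nat by blast
  have "{..p} = insert p (insert 0 {1..<p})"
    using p by auto
  then have "(a + b) ^ p = t p + t 0 + (\<Sum>k\<in>{1..<p}. t k)"
    using p by (simp add: binomial_ring t_def add.assoc)
  moreover have "of_nat p dvd t k" if "k \<in> {1..<p}" for k
  proof -
    have "p dvd p choose k"
      using assms that by (intro dvd_choose_prime) auto
    then obtain q where "p choose k = p * q" ..
    then show ?thesis
      unfolding t_def by (simp add: mult.assoc)
  qed
  then have "of_nat p dvd (\<Sum>k\<in>{1..<p}. t k)"
    by (rule dvd_sum)
  ultimately show ?thesis
    by (simp add: t_def)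
qed

lemma prime_dvd_power_minus_1_diff:
  fixes a :: "'a::comm_ring_1"
  assumes "prime p"
  shows "of_nat p dvd (a - 1) ^ p - (a ^ p - 1)"
proof -
  have "of_nat p dvd ((a + - 1) ^ p - a ^ p - (- 1) ^ p) - ((1 + - 1) ^ p - 1 ^ p - (- 1) ^ p)"
    using assms by (intro dvd_diff prime_dvd_power_add_diff)
  moreover have "(1 + - 1 :: 'a) ^ p = 0"
    using prime_gt_0_nat[OF assms] by (simp add: zero_power)
  ultimately show ?thesis
    by (simp add: algebra_simps)
qed

lemma power_in_ideal_sum:
  fixes G F c :: "'a::comm_ring_1"
  assumes "c dvd G ^ p - F"
  obtains u v where "G ^ (p * L * j) = F ^ L * u + c ^ j * v"
proof -
  have "G ^ p - F dvd (G ^ p) ^ L - F ^ L"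
    by (metis dvd_triv_left power_diff_sumr2)
  then have "c dvd G ^ (p * L) - F ^ L"
    using assms by (simp add: power_mult dvd_trans)
  then obtain h where "G ^ (p * L) - F ^ L = c * h" ..
  then have h: "G ^ (p * L) = F ^ L + c * h"
    by (simp add: algebra_simps)
  have "F ^ L dvd (F ^ L + c * h) ^ j - (c * h) ^ j"
    using power_diff_sumr2[of "F ^ L + c * h" j "c * h"] by simp
  then obtain w where "G ^ (p * L * j) - (c * h) ^ j = F ^ L * w"
    using h by (auto simp: power_mult)
  then show thesis
    by (intro that[of w "h ^ j"]) (simp add: algebra_simps)
qed

lemma prime_dvd_monom_minus_1_power_diff:
  assumes "prime p"
  shows "(of_nat p :: 'a::comm_ring_1 poly) dvd (monom 1 m - 1) ^ p - (monom 1 (m * p) - 1)"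
  using prime_dvd_power_minus_1_diff[OF assms, of "monom 1 m :: 'a poly"]
  by (simp add: monom_power mult.commute)

text \<open>With \<open>F = q^(mp) - 1\<close> and \<open>G = q^m - 1\<close> we have \<open>G^p \<equiv> F\<close> modulo \<open>p\<close>, so for
  \<open>N = pLj + L\<close> the power \<open>G^N\<close> lies in the ideal \<open>(F^L, p^j)\<close>.  The value \<open>d (F^N)\<close> is
  divisible by \<open>G^N\<close> and congruent to \<open>d (F^L)\<close> modulo \<open>F^L\<close>, so \<open>d (F^L)\<close> lies in
  \<open>(F^L, p^j)\<close> for every \<open>j\<close>.\<close>
lemma lim_zero_divs_mult_prime:
  fixes d :: "int poly \<Rightarrow> 'a::comm_ring_1 poly"
  assumes "0 < m" "prime p" "padic_separated p TYPE('a)"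
    and d: "lim_elem (divs (m * p)) d" and d_m: "lim_zero (divs m) d"
  shows "lim_zero (divs (m * p)) d"
proof -
  define F G where "F = (monom 1 (m * p) - 1 :: int poly)" and "G = (monom 1 m - 1 :: int poly)"
  have mp: "0 < m * p"
    using assms(1,2) prime_gt_0_nat by simp
  have "ofip (F ^ L) dvd d (F ^ L)" for L
  proof (rule monic_dvd_if_dvd_modulo_powers)
    show "lead_coeff (ofip (F ^ L) :: 'a poly) = 1"
      using lead_coeff_monom_minus_1[OF mp, where 'a=int]
      unfolding F_def by (intro lead_coeff_ofip) (simp add: lead_coeff_power)
    show "x = 0" if "\<forall>j. (of_nat p) ^ j dvd x" for x :: 'a
      using assms(3) that unfolding padic_separated_def by blast
    fix j
    define N where "N = p * L * j + L"
    have "(of_nat p :: 'a poly) dvd ofip G ^ p - ofip F"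
      using prime_dvd_monom_minus_1_power_diff[OF assms(2)] by (simp add: F_def G_def)
    then obtain u v :: "'a poly" where "ofip G ^ (p * L * j) = ofip F ^ L * u + of_nat p ^ j * v"
      by (rule power_in_ideal_sum)
    then have uv: "ofip G ^ (p * L * j) = ofip F ^ L * u + smult (of_nat p ^ j) v"
      by (simp add: of_nat_poly poly_const_pow)
    obtain w where w: "d (F ^ N) - d (F ^ L) = ofip F ^ L * w"
      using lim_elem_divs_power_diff[OF mp d, of L N] unfolding F_def N_def by auto
    obtain e where e: "d (F ^ N) = ofip G ^ N * e"
      using lim_zero_divs_dvd_at_power[OF assms(1) _ mp d d_m, of N] unfolding F_def G_def by auto
    have "d (F ^ L) = ofip G ^ (p * L * j) * ofip G ^ L * e - ofip F ^ L * w"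
      using w e unfolding N_def by (simp add: power_add algebra_simps)
    also have "\<dots> = ofip F ^ L * (u * ofip G ^ L * e - w) + smult (of_nat p ^ j) (v * ofip G ^ L * e)"
      unfolding uv by (simp add: algebra_simps)
    finally show "\<exists>u v. d (F ^ L) = ofip (F ^ L) * u + smult (of_nat p ^ j) v"
      by auto
  qed
  with mp d show ?thesis
    unfolding F_def by (rule lim_zero_divs_if_powers)
qed

definition prime_divisors_separated :: "'a::comm_ring_1 itself \<Rightarrow> nat \<Rightarrow> bool" where
  "prime_divisors_separated R n \<longleftrightarrow> (\<forall>p. prime p \<longrightarrow> p dvd n \<longrightarrow> padic_separated p R)"

lemma lim_zero_divs_if_lim_zero_divs_1:
  fixes d :: "int poly \<Rightarrow> 'a::comm_ring_1 poly"
  assumes "0 < n" "prime_divisors_separated TYPE('a) n"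
    and "lim_elem (divs n) d" "lim_zero (divs 1) d"
  shows "lim_zero (divs n) d"
  using assms
proof (induction n rule: less_induct)
  case (less n)
  show ?case
  proof (cases "n = 1")
    case True
    with less.prems show ?thesis by simp
  next
    case False
    then obtain p where p: "prime p" "p dvd n"
      using prime_factor_nat by blast
    then obtain m where n: "n = m * p"
      by (metis dvd_mult_div_cancel mult.commute)
    have "0 < m"
      using less.prems(1) unfolding n by simp
    moreover have "m < n"
      using calculation prime_gt_1_nat[OF p(1)] unfolding n by simp
    ultimately have m: "0 < m" "m < n" .
    have "divs m \<subseteq> divs n"
      using less.prems(1) by (rule divs_subset) (simp add: n)
    then have "lim_elem (divs m) d"
      using less.prems(3) by (rule lim_elem_mono)
    moreover have "prime_divisors_separated TYPE('a) m"
      using less.prems(2) unfolding n prime_divisors_separated_def by (blast intro: dvd_mult2)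
    ultimately have "lim_zero (divs m) d"
      using less.IH[OF m(2) m(1)] less.prems(4) by blast
    moreover have "padic_separated p TYPE('a)"
      using less.prems(2) p unfolding prime_divisors_separated_def by blast
    ultimately show ?thesis
      using lim_zero_divs_mult_prime[OF m(1) p(1)] less.prems(3) unfolding n by blast
  qed
qed

lemma lim_eq_divs_if_lim_eq_divs_1:
  fixes x y :: "int poly \<Rightarrow> 'a::comm_ring_1 poly"
  assumes "0 < n" "prime_divisors_separated TYPE('a) n"
    and "lim_elem (divs n) x" "lim_elem (divs n) y" "lim_eq (divs 1) x y"
  shows "lim_eq (divs n) x y"
  using assms lim_zero_divs_if_lim_zero_divs_1[of n "\<lambda>f. x f - y f"]
  by (simp add: lim_eq_iff_lim_zero lim_elem_diff)

section \<open>Admissible sets\<close>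

lemma prime_divisors_separated_rel_R:
  assumes "rel_R R k k'" "prime_divisors_separated R k"
  shows "prime_divisors_separated R k'"
  unfolding prime_divisors_separated_def
proof (intro allI impI)
  fix p :: nat assume p: "prime p" "p dvd k'"
  from assms(1) show "padic_separated p R"
    unfolding rel_R_def
  proof (elim disjE exE conjE)
    fix q i assume "k = k' * q ^ i"
    then show ?thesis
      using assms(2) p unfolding prime_divisors_separated_def by (blast intro: dvd_mult2)
  next
    fix q i assume q: "prime q" "padic_separated q R" "k' = k * q ^ i"
    then have "p dvd k \<or> p = q"
      using p by (metis prime_dvd_mult_iff prime_dvd_power primes_dvd_imp_eq)
    then show ?thesis
      using assms(2) p q unfolding prime_divisors_separated_def by blast
  next
    assume "(UNIV :: 'a set) = {0}"
    then show ?thesis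
      unfolding padic_separated_def by auto
  qed (use assms(2) p in \<open>simp add: prime_divisors_separated_def\<close>)
qed

lemma padic_separated_int:
  assumes "1 < p"
  shows "padic_separated p TYPE(int)"
  unfolding padic_separated_def
proof (intro allI impI)
  fix x :: int assume dvd: "\<forall>j. int p ^ j dvd x"
  show "x = 0"
  proof (rule ccontr)
    assume "x \<noteq> 0"
    define k where "k = nat \<bar>x\<bar>"
    have "\<bar>x\<bar> < 2 ^ k"
      unfolding k_def by (metis abs_ge_zero int_nat_eq less_exp of_nat_less_iff of_nat_numeral of_nat_power)
    also have "\<dots> \<le> int p ^ k"
      using assms by (intro power_mono) auto
    also have "\<dots> \<le> \<bar>x\<bar>"
      using dvd_imp_le_int[OF \<open>x \<noteq> 0\<close> dvd[rule_format, of k]] by simp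
    finally show False
      by simp
  qed
qed

text \<open>The chain condition of admissibility is used only to make all prime divisors of elements
  of \<open>S\<close> separated, see \<open>admissible_separated_divisor_set\<close>.\<close>
locale separated_divisor_set =
  fixes R :: "'a::comm_ring_1 itself" and S :: "nat set"
  assumes nonempty: "S \<noteq> {}"
    and positive: "n \<in> S \<Longrightarrow> 0 < n"
    and directed: "a \<in> S \<Longrightarrow> b \<in> S \<Longrightarrow> \<exists>c\<in>S. a dvd c \<and> b dvd c"
    and divs_closed: "n \<in> S \<Longrightarrow> divs n \<subseteq> S"
    and separated: "n \<in> S \<Longrightarrow> prime_divisors_separated R n"
begin

lemma separated_TYPE: "n \<in> S \<Longrightarrow> prime_divisors_separated TYPE('a) n"
  using separated unfolding prime_divisors_separated_def padic_separated_def .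

lemma one_mem: "1 \<in> S"
  using nonempty positive divs_closed one_mem_divs by blast

lemma common_multiple:
  assumes "finite A" "A \<subseteq> S"
  shows "\<exists>n\<in>S. \<forall>k\<in>A. k dvd n"
  using assms
proof (induction A rule: finite_induct)
  case empty
  then show ?case using one_mem by blast
next
  case (insert k A)
  then obtain n where "n \<in> S" "\<forall>k\<in>A. k dvd n"
    by blast
  moreover obtain c where "c \<in> S" "k dvd c" "n dvd c"
    using directed insert.prems \<open>n \<in> S\<close> by blast
  ultimately show ?case
    by (blast intro: dvd_trans)
qed

lemma Phi_star_in_divs:
  assumes "f \<in> Phi_star S"
  obtains n where "n \<in> S" "f \<in> Phi_star (divs n)"
proof -
  obtain M where f: "f = prod_mset (image_mset cyclo M)" and M: "set_mset M \<subseteq> S"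
    using assms unfolding Phi_star_def by blast
  then obtain n where n: "n \<in> S" "\<forall>k\<in>set_mset M. k dvd n"
    using common_multiple[of "set_mset M"] by blast
  then have "set_mset M \<subseteq> divs n"
    using M positive unfolding divs_def by blast
  then show ?thesis
    using that n(1) f unfolding Phi_star_def by blast
qed

lemma lim_eq_divs:
  fixes x y :: "int poly \<Rightarrow> 'a poly"
  assumes "m \<in> S" "n \<in> S" "lim_elem (divs n) x" "lim_elem (divs n) y" "lim_eq (divs m) x y"
  shows "lim_eq (divs n) x y"
proof (rule lim_eq_divs_if_lim_eq_divs_1)
  from divs_subset[OF positive[OF assms(1)] one_dvd]
  show "lim_eq (divs 1) x y"
    using assms(5) by (rule lim_eq_mono)
qed (use assms positive separated_TYPE in simp_all)

lemma lim_eq_if_lim_eq_divs_1: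
  fixes x y :: "int poly \<Rightarrow> 'a poly"
  assumes "lim_elem S x" "lim_elem S y" "lim_eq (divs 1) x y"
  shows "lim_eq S x y"
  unfolding lim_eq_def
proof
  fix f assume "f \<in> Phi_star S"
  then obtain n where n: "n \<in> S" "f \<in> Phi_star (divs n)"
    by (rule Phi_star_in_divs)
  have "lim_eq (divs n) x y"
    using one_mem n(1) lim_elem_mono[OF divs_closed[OF n(1)] assms(1)]
      lim_elem_mono[OF divs_closed[OF n(1)] assms(2)] assms(3)
    by (rule lim_eq_divs)
  then show "ofip f dvd x f - y f"
    using n(2) unfolding lim_eq_def by blast
qed

lemma lim_elem_glue:
  fixes Y :: "nat \<Rightarrow> int poly \<Rightarrow> 'a poly"
  assumes Y: "\<And>n. n \<in> S \<Longrightarrow> lim_elem (divs n) (Y n)"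
    and compatible: "\<And>n c. n \<in> S \<Longrightarrow> c \<in> S \<Longrightarrow> n dvd c \<Longrightarrow> lim_eq (divs n) (Y n) (Y c)"
    and N: "\<And>f. f \<in> Phi_star S \<Longrightarrow> N f \<in> S \<and> f \<in> Phi_star (divs (N f))"
  shows "lim_elem S (\<lambda>f. Y (N f) f)"
  unfolding lim_elem_def
proof (intro ballI impI)
  fix f g assume f: "f \<in> Phi_star S" and g: "g \<in> Phi_star S" and "f dvd g"
  obtain c where c: "c \<in> S" "N f dvd c" "N g dvd c"
    using directed N f g by blast
  have "Phi_star (divs (N f)) \<subseteq> Phi_star (divs c)" "Phi_star (divs (N g)) \<subseteq> Phi_star (divs c)"
    using c positive by (simp_all add: Phi_star_mono divs_subset)
  then have "ofip f dvd Y c g - Y c f"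
    using Y[OF c(1)] N f g \<open>f dvd g\<close> unfolding lim_elem_def by blast
  moreover have "ofip f dvd Y (N f) f - Y c f"
    using compatible[of "N f" c] N f c unfolding lim_eq_def by blast
  moreover have "ofip g dvd Y (N g) g - Y c g"
    using compatible[of "N g" c] N g c unfolding lim_eq_def by blast
  then have "ofip f dvd Y (N g) g - Y c g"
    using ofip_dvd[OF \<open>f dvd g\<close>] by (rule dvd_trans[rotated])
  ultimately have "ofip f dvd (Y (N g) g - Y c g) + (Y c g - Y c f) - (Y (N f) f - Y c f)"
    by (blast intro: dvd_add dvd_diff)
  then show "ofip f dvd Y (N g) g - Y (N f) f"
    by simp
qed

lemma lim_exists_iff_local:
  fixes z :: "int poly \<Rightarrow> 'a poly"
  shows "(\<exists>x. lim_elem S x \<and> lim_eq (divs 1) x z) \<longleftrightarrow>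
    (\<forall>n\<in>S. \<exists>y. lim_elem (divs n) y \<and> lim_eq (divs 1) y z)"
proof
  assume "\<exists>x. lim_elem S x \<and> lim_eq (divs 1) x z"
  then show "\<forall>n\<in>S. \<exists>y. lim_elem (divs n) y \<and> lim_eq (divs 1) y z"
    using divs_closed lim_elem_mono by blast
next
  assume "\<forall>n\<in>S. \<exists>y. lim_elem (divs n) y \<and> lim_eq (divs 1) y z"
  then obtain Y where Y: "\<And>n. n \<in> S \<Longrightarrow> lim_elem (divs n) (Y n) \<and> lim_eq (divs 1) (Y n) z"
    by metis
  have "\<forall>f. \<exists>n. f \<in> Phi_star S \<longrightarrow> n \<in> S \<and> f \<in> Phi_star (divs n)"
    by (metis Phi_star_in_divs)
  then obtain N where N: "\<And>f. f \<in> Phi_star S \<Longrightarrow> N f \<in> S \<and> f \<in> Phi_star (divs (N f))"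
    by metis
  have "lim_eq (divs n) (Y n) (Y c)" if "n \<in> S" "c \<in> S" "n dvd c" for n c
  proof (rule lim_eq_divs[OF one_mem that(1)])
    show "lim_elem (divs n) (Y c)"
      using divs_subset[OF positive[OF that(2)] that(3)] conjunct1[OF Y[OF that(2)]]
      by (rule lim_elem_mono)
    show "lim_eq (divs 1) (Y n) (Y c)"
      using Y that(1,2) by (blast intro: lim_eq_trans_sym)
  qed (use Y that in blast)
  then have "lim_elem S (\<lambda>f. Y (N f) f)"
    using Y N by (intro lim_elem_glue) blast+
  moreover have "lim_eq (divs 1) (\<lambda>f. Y (N f) f) z"
    unfolding lim_eq_def
  proof
    fix f assume f: "f \<in> Phi_star (divs 1)"
    then have "f \<in> Phi_star S"
      using Phi_star_mono divs_closed one_mem by blast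
    then show "ofip f dvd Y (N f) f - z f"
      using Y N f unfolding lim_eq_def by blast
  qed
  ultimately show "\<exists>x. lim_elem S x \<and> lim_eq (divs 1) x z"
    by blast
qed

end

lemma admissible_separated_divisor_set:
  assumes "admissible R S"
  shows "separated_divisor_set R S"
proof
  show "S \<noteq> {}" "n \<in> S \<Longrightarrow> 0 < n" "n \<in> S \<Longrightarrow> divs n \<subseteq> S"
    "a \<in> S \<Longrightarrow> b \<in> S \<Longrightarrow> \<exists>c\<in>S. a dvd c \<and> b dvd c" for a b n
    using assms unfolding admissible_def by auto
  then have "1 \<in> S"
    using one_mem_divs by blast
  show "prime_divisors_separated R n" if "n \<in> S" for n
  proof -
    have "(\<lambda>x y. x \<in> S \<and> y \<in> S \<and> rel_R R x y)\<^sup>*\<^sup>* 1 n"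
      using assms \<open>1 \<in> S\<close> that unfolding admissible_def by blast
    then show ?thesis
    proof (induction rule: rtranclp_induct)
      case base
      show ?case
        unfolding prime_divisors_separated_def by simp
    next
      case (step y z)
      then show ?case
        by (blast intro: prime_divisors_separated_rel_R)
    qed
  qed
qed

lemma positive_separated_divisor_set: "separated_divisor_set TYPE(int) {k. 0 < k}"
proof
  show "\<exists>c\<in>{k. 0 < k}. a dvd c \<and> b dvd c" if "a \<in> {k. 0 < k}" "b \<in> {k. 0 < k}" for a b :: nat
    using that by (intro bexI[of _ "a * b"]) auto
  show "prime_divisors_separated TYPE(int) n" for n
    unfolding prime_divisors_separated_def using padic_separated_int prime_gt_1_nat by blast
qed (auto simp: divs_def)

theorem corollary4p3:
  fixes S :: "nat set"
  assumes "admissible TYPE('a::comm_ring_1) S"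
  shows "(\<forall>m\<in>S. \<forall>n\<in>S. m dvd n \<longrightarrow>
            (\<forall>x y :: int poly \<Rightarrow> 'a poly. lim_elem (divs n) x \<longrightarrow> lim_elem (divs n) y \<longrightarrow>
               lim_eq (divs m) x y \<longrightarrow> lim_eq (divs n) x y))
       \<and> (\<forall>x y :: int poly \<Rightarrow> 'a poly. lim_elem S x \<longrightarrow> lim_elem S y \<longrightarrow>
               lim_eq (divs 1) x y \<longrightarrow> lim_eq S x y)
       \<and> (\<forall>z :: int poly \<Rightarrow> 'a poly. lim_elem (divs 1) z \<longrightarrow>
            ((\<exists>x. lim_elem S x \<and> lim_eq (divs 1) x z) \<longleftrightarrow>
             (\<forall>n\<in>S. \<exists>y. lim_elem (divs n) y \<and> lim_eq (divs 1) y z)))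
       \<and> (\<forall>m n :: nat. 0 < m \<longrightarrow> 0 < n \<longrightarrow> m dvd n \<longrightarrow>
            (\<forall>x y :: int poly \<Rightarrow> int poly. lim_elem (divs n) x \<longrightarrow> lim_elem (divs n) y \<longrightarrow>
               lim_eq (divs m) x y \<longrightarrow> lim_eq (divs n) x y))
       \<and> (\<forall>x y :: int poly \<Rightarrow> int poly. lim_elem {k. 0 < k} x \<longrightarrow> lim_elem {k. 0 < k} y \<longrightarrow>
               lim_eq (divs 1) x y \<longrightarrow> lim_eq {k. 0 < k} x y)
       \<and> (\<forall>z :: int poly \<Rightarrow> int poly. lim_elem (divs 1) z \<longrightarrow>
            ((\<exists>x. lim_elem {k. 0 < k} x \<and> lim_eq (divs 1) x z) \<longleftrightarrow>
             (\<forall>n>0. \<exists>y. lim_elem (divs n) y \<and> lim_eq (divs 1) y z)))"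
proof -
  interpret S: separated_divisor_set "TYPE('a)" S
    using assms by (rule admissible_separated_divisor_set)
  interpret Z: separated_divisor_set "TYPE(int)" "{k. 0 < k}"
    by (rule positive_separated_divisor_set)
  show ?thesis
    using S.lim_eq_divs S.lim_eq_if_lim_eq_divs_1 S.lim_exists_iff_local
      Z.lim_eq_divs Z.lim_eq_if_lim_eq_divs_1 Z.lim_exists_iff_local
    by simp
qed

end
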